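(* Let $S$ be a smooth cubic surface over a field $K$. Suppose $S$ contains a skew pair of $K$-lines $\ell,\ell'$, and let $P\in\ell(K)$ be such that $\Gamma_P$ is the union of $\ell$ and a conic that is irreducible over $K$. Then the point $\ell'\cap\Pi_P$ is not an Eckardt point.
   Context: A smooth cubic surface $S$ over $K$ is a nonsingular surface in $\mathbb{P}^3$ defined by a homogeneous cubic over $K$. A $K$-line is a line in $\mathbb{P}^3$ defined over $K$; lines "on $S$" are lines over $\overline{K}$ contained in $S$. A skew pair of lines is a pair of disjoint lines. An Eckardt point is a point of $S$ through which three of the lines on $S$ pass. For $P\in S(\overline{K})$, $\Pi_P$ is the tangent plane to $S$ at $P$ and $\Gamma_P=S\cap\Pi_P$ (a plane cubic curve). *)

theory Defs
  imports "HOL-Library.Numeral_Type" "HOL-Algebra.Algebraic_Closure_Type"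
begin

text \<open>Points of projective 3-space are represented by nonzero coordinate vectors
  of type 4 \<Rightarrow> 'a (homogeneous coordinates indexed by the 4-element type 4).
  Homogeneous forms of degree d in 4 variables are given by coefficient functions
  on exponent vectors e :: 4 \<Rightarrow> nat with total degree d.\<close>

definition monoms :: "nat \<Rightarrow> (4 \<Rightarrow> nat) set" where
  "monoms d = {e. sum e UNIV = d}"

definition form_eval :: "nat \<Rightarrow> ((4 \<Rightarrow> nat) \<Rightarrow> 'a::comm_ring_1) \<Rightarrow> (4 \<Rightarrow> 'a) \<Rightarrow> 'a" where
  "form_eval d c x = (\<Sum>e\<in>monoms d. c e * (\<Prod>i\<in>UNIV. x i ^ e i))"

definition form_deriv :: "nat \<Rightarrow> ((4 \<Rightarrow> nat) \<Rightarrow> 'a::comm_ring_1) \<Rightarrow> 4 \<Rightarrow> (4 \<Rightarrow> 'a) \<Rightarrow> 'a" where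
  "form_deriv d c i x =
     (\<Sum>e\<in>monoms d. of_nat (e i) * c e * (\<Prod>j\<in>UNIV. x j ^ ((e(i := e i - 1)) j)))"

definition lin_eval :: "(4 \<Rightarrow> 'a::comm_ring_1) \<Rightarrow> (4 \<Rightarrow> 'a) \<Rightarrow> 'a" where
  "lin_eval a x = (\<Sum>i\<in>UNIV. a i * x i)"

definition nonzero_vec :: "(4 \<Rightarrow> 'a::zero) \<Rightarrow> bool" where
  "nonzero_vec x \<longleftrightarrow> (\<exists>i. x i \<noteq> 0)"

text \<open>Base field K = 'k, algebraic closure = 'k alg_closure with embedding to_ac.\<close>

abbreviation lift_vec :: "(4 \<Rightarrow> 'k::field) \<Rightarrow> (4 \<Rightarrow> 'k alg_closure)" where
  "lift_vec v \<equiv> (\<lambda>i. to_ac (v i))"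

abbreviation lift_coeffs :: "((4 \<Rightarrow> nat) \<Rightarrow> 'k::field) \<Rightarrow> ((4 \<Rightarrow> nat) \<Rightarrow> 'k alg_closure)" where
  "lift_coeffs c \<equiv> (\<lambda>e. to_ac (c e))"

definition cubicF :: "((4 \<Rightarrow> nat) \<Rightarrow> 'k::field) \<Rightarrow> (4 \<Rightarrow> 'k alg_closure) \<Rightarrow> 'k alg_closure" where
  "cubicF c x = form_eval 3 (lift_coeffs c) x"

definition cubicF_deriv :: "((4 \<Rightarrow> nat) \<Rightarrow> 'k::field) \<Rightarrow> 4 \<Rightarrow> (4 \<Rightarrow> 'k alg_closure) \<Rightarrow> 'k alg_closure" where
  "cubicF_deriv c i x = form_deriv 3 (lift_coeffs c) i x"

definition smooth_cubic :: "((4 \<Rightarrow> nat) \<Rightarrow> 'k::field) \<Rightarrow> bool" where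
  "smooth_cubic c \<longleftrightarrow>
     \<not> (\<exists>x. nonzero_vec x \<and> cubicF c x = 0 \<and> (\<forall>i. cubicF_deriv c i x = 0))"

text \<open>Lines in P^3 (over the algebraic closure) as 2-dimensional subspaces.\<close>
definition lin_indep2 :: "(4 \<Rightarrow> 'a::field) \<Rightarrow> (4 \<Rightarrow> 'a) \<Rightarrow> bool" where
  "lin_indep2 u w \<longleftrightarrow> (\<forall>a b. (\<forall>i. a * u i + b * w i = 0) \<longrightarrow> a = 0 \<and> b = 0)"

definition span2 :: "(4 \<Rightarrow> 'a::field) \<Rightarrow> (4 \<Rightarrow> 'a) \<Rightarrow> (4 \<Rightarrow> 'a) set" where
  "span2 u w = {x. \<exists>a b. x = (\<lambda>i. a * u i + b * w i)}"

definition is_line :: "(4 \<Rightarrow> 'a::field) set \<Rightarrow> bool" where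
  "is_line M \<longleftrightarrow> (\<exists>u w. lin_indep2 u w \<and> M = span2 u w)"

definition K_line :: "(4 \<Rightarrow> 'k::field alg_closure) set \<Rightarrow> bool" where
  "K_line M \<longleftrightarrow> (\<exists>u w :: 4 \<Rightarrow> 'k. lin_indep2 (lift_vec u) (lift_vec w)
                                     \<and> M = span2 (lift_vec u) (lift_vec w))"

definition line_on :: "((4 \<Rightarrow> nat) \<Rightarrow> 'k::field) \<Rightarrow> (4 \<Rightarrow> 'k alg_closure) set \<Rightarrow> bool" where
  "line_on c M \<longleftrightarrow> is_line M \<and> (\<forall>x\<in>M. cubicF c x = 0)"

definition skew :: "(4 \<Rightarrow> 'a::field) set \<Rightarrow> (4 \<Rightarrow> 'a) set \<Rightarrow> bool" where
  "skew M N \<longleftrightarrow> (\<forall>x. x \<in> M \<and> x \<in> N \<longrightarrow> \<not> nonzero_vec x)"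

definition tangent_plane :: "((4 \<Rightarrow> nat) \<Rightarrow> 'k::field) \<Rightarrow> (4 \<Rightarrow> 'k alg_closure)
                              \<Rightarrow> (4 \<Rightarrow> 'k alg_closure) set" where
  "tangent_plane c P = {x. (\<Sum>i\<in>UNIV. cubicF_deriv c i P * x i) = 0}"

definition eckardt :: "((4 \<Rightarrow> nat) \<Rightarrow> 'k::field) \<Rightarrow> (4 \<Rightarrow> 'k alg_closure) \<Rightarrow> bool" where
  "eckardt c Q \<longleftrightarrow> nonzero_vec Q \<and> cubicF c Q = 0 \<and>
     (\<exists>L1 L2 L3. line_on c L1 \<and> line_on c L2 \<and> line_on c L3 \<and>
        L1 \<noteq> L2 \<and> L1 \<noteq> L3 \<and> L2 \<noteq> L3 \<and> Q \<in> L1 \<and> Q \<in> L2 \<and> Q \<in> L3)"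

text \<open>Gamma_P = S \<inter> Pi_P is the union of the line l and a conic irreducible over K:
  on the plane Pi_P, F = a * q with a K-linear form a cutting out l in Pi_P and a
  K-quadratic form q which is not identically zero on Pi_P and does not factor as
  a product of two K-linear forms on Pi_P.\<close>
definition gamma_line_plus_irred_conic ::
  "((4 \<Rightarrow> nat) \<Rightarrow> 'k::field) \<Rightarrow> (4 \<Rightarrow> 'k alg_closure) set \<Rightarrow> (4 \<Rightarrow> 'k) \<Rightarrow> bool" where
  "gamma_line_plus_irred_conic c l P \<longleftrightarrow>
     (let Pi = tangent_plane c (lift_vec P) in
      \<exists>(a :: 4 \<Rightarrow> 'k) (q :: (4 \<Rightarrow> nat) \<Rightarrow> 'k).
        (\<forall>x\<in>Pi. cubicF c x = lin_eval (lift_vec a) x * form_eval 2 (lift_coeffs q) x) \<and>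
        l = {x\<in>Pi. lin_eval (lift_vec a) x = 0} \<and>
        (\<exists>x\<in>Pi. form_eval 2 (lift_coeffs q) x \<noteq> 0) \<and>
        \<not> (\<exists>b b' :: 4 \<Rightarrow> 'k. \<forall>x\<in>Pi.
              form_eval 2 (lift_coeffs q) x = lin_eval (lift_vec b) x * lin_eval (lift_vec b') x))"

end

theory Submission
  imports Defs "HOL-Analysis.Cartesian_Space"
begin

text \<open>
  Let Q be a point of l' on the tangent plane H = Pi_P, and suppose Q is an
  Eckardt point.  Since l and l' are skew, Q is not on l, so the linear form a cutting out l
  does not vanish at Q and the conic q passes through Q.  The three lines of S through Q lie
  in the tangent plane of S at Q; comparing the Taylor expansion of F = a q at Q along H with
  the vanishing of F on those three lines shows that q vanishes on a whole line through Q
  inside H.  Now Q = l' \<inter> H is a K-rational point (both are defined over K and l' is not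
  contained in H), so the polar form of q at Q is a K-linear form.  If it vanishes on H, the
  tangent plane of S at Q contains both l and l', which then meet.  Otherwise the line
  contained in the conic is cut out by this K-rational polar form, and q factors over K on H,
  contradicting the irreducibility of the conic.
\<close>

subsection \<open>Coordinates in 4-space\<close>

lemma four_cases: "x = (0::4) \<or> x = 1 \<or> x = 2 \<or> x = 3"
proof (induct x rule: bit0_induct)
  case (of_int z)
  hence "z = 0 \<or> z = 1 \<or> z = 2 \<or> z = 3" by auto
  thus ?case by auto
qed

lemma UNIV_4: "(UNIV :: 4 set) = {0, 1, 2, 3}"
  using four_cases by auto

lemma sum_4: "(\<Sum>i\<in>UNIV. f i) = f (0::4) + f 1 + f 2 + f 3"
  unfolding UNIV_4 by (simp add: add.assoc)

lemma prod_4: "(\<Prod>i\<in>UNIV. f i) = f (0::4) * f 1 * f 2 * f 3"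
  unfolding UNIV_4 by (simp add: mult.assoc)

lemma exponents_deg3_cases:
  assumes "(a::nat) + b + c + d = 3"
  obtains "a=3" "b=0" "c=0" "d=0" | "a=0" "b=3" "c=0" "d=0" | "a=0" "b=0" "c=3" "d=0" | "a=0" "b=0" "c=0" "d=3"
  | "a=2" "b=1" "c=0" "d=0" | "a=2" "b=0" "c=1" "d=0" | "a=2" "b=0" "c=0" "d=1"
  | "a=1" "b=2" "c=0" "d=0" | "a=0" "b=2" "c=1" "d=0" | "a=0" "b=2" "c=0" "d=1"
  | "a=1" "b=0" "c=2" "d=0" | "a=0" "b=1" "c=2" "d=0" | "a=0" "b=0" "c=2" "d=1"
  | "a=1" "b=0" "c=0" "d=2" | "a=0" "b=1" "c=0" "d=2" | "a=0" "b=0" "c=1" "d=2"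
  | "a=1" "b=1" "c=1" "d=0" | "a=1" "b=1" "c=0" "d=1" | "a=1" "b=0" "c=1" "d=1" | "a=0" "b=1" "c=1" "d=1"
proof -
  have d: "d = 3 - a - b - c" using assms by arith
  have "a = 0 \<or> a = 1 \<or> a = 2 \<or> a = 3" "b = 0 \<or> b = 1 \<or> b = 2 \<or> b = 3"
    "c = 0 \<or> c = 1 \<or> c = 2 \<or> c = 3" using assms by arith+
  thus thesis using that assms unfolding d by (elim disjE) simp_all
qed

lemma exponents_deg2_cases:
  assumes "(a::nat) + b + c + d = 2"
  obtains "a=2" "b=0" "c=0" "d=0" | "a=0" "b=2" "c=0" "d=0" | "a=0" "b=0" "c=2" "d=0" | "a=0" "b=0" "c=0" "d=2"
  | "a=1" "b=1" "c=0" "d=0" | "a=1" "b=0" "c=1" "d=0" | "a=1" "b=0" "c=0" "d=1"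
  | "a=0" "b=1" "c=1" "d=0" | "a=0" "b=1" "c=0" "d=1" | "a=0" "b=0" "c=1" "d=1"
proof -
  have d: "d = 2 - a - b - c" using assms by arith
  have "a = 0 \<or> a = 1 \<or> a = 2" "b = 0 \<or> b = 1 \<or> b = 2" "c = 0 \<or> c = 1 \<or> c = 2"
    using assms by arith+
  thus thesis using that assms unfolding d by (elim disjE) simp_all
qed

definition lincomb :: "'a::comm_ring_1 \<Rightarrow> (4 \<Rightarrow> 'a) \<Rightarrow> 'a \<Rightarrow> (4 \<Rightarrow> 'a) \<Rightarrow> (4 \<Rightarrow> 'a)" where
  "lincomb s x t v = (\<lambda>i. s * x i + t * v i)"

lemma lin_eval_lincomb: "lin_eval a (lincomb s x t v) = s * lin_eval a x + t * lin_eval a v"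
  unfolding lin_eval_def lincomb_def
  by (simp add: distrib_left sum.distrib mult.left_commute flip: sum_distrib_left)

lemma lin_eval_comb4:
  "lin_eval a (\<lambda>i. a0 * x0 i + a1 * x1 i + a2 * x2 i + a3 * x3 i) =
   a0 * lin_eval a x0 + a1 * lin_eval a x1 + a2 * lin_eval a x2 + a3 * lin_eval a x3"
  unfolding lin_eval_def
  by (simp add: distrib_left sum.distrib mult.left_commute flip: sum_distrib_left)

lemma lincomb_solve:
  fixes x y z :: "4 \<Rightarrow> 'a::field"
  assumes "\<forall>i. a * x i + b * y i + c * z i = 0" and "c \<noteq> 0"
  shows "z = lincomb (-a/c) x (-b/c) y"
  unfolding lincomb_def
proof
  fix i
  have "c * z i = - (a * x i + b * y i)"
    using assms(1) by (metis add.commute eq_neg_iff_add_eq_0)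
  thus "z i = (-a/c) * x i + (-b/c) * y i"
    using assms(2) by (simp add: field_simps)
qed

definition unitv :: "4 \<Rightarrow> 4 \<Rightarrow> 'a::comm_ring_1" where
  "unitv i = (\<lambda>j. if j = i then 1 else 0)"

lemma unitv_lift: "(\<lambda>j. to_ac (unitv i j)) = unitv i"
  unfolding unitv_def by (simp add: fun_eq_iff)

lemma vec_decomp:
  "v = lincomb (v 0) (unitv 0) 1 (lincomb (v 1) (unitv 1) 1 (lincomb (v 2) (unitv 2) (v 3) (unitv 3)))"
  unfolding lincomb_def unitv_def
proof
  fix j :: 4
  from four_cases[of j] show "v j = v 0 * (if j = 0 then 1 else 0) + 1 * (v 1 * (if j = 1 then 1 else 0) +
      1 * (v 2 * (if j = 2 then 1 else 0) + v 3 * (if j = 3 then 1 else 0)))"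
    by (elim disjE) simp_all
qed

lemma lin_eval_unitv: "lin_eval d (unitv j) = d j"
proof -
  have "lin_eval d (unitv j) = (\<Sum>i\<in>UNIV. if i = j then d i else 0)"
    unfolding lin_eval_def unitv_def by (rule sum.cong) auto
  thus ?thesis by simp
qed

lemma lin_eval_coord: "lin_eval a v = (\<Sum>i\<in>UNIV. v i * a i)"
  unfolding lin_eval_def by (simp add: mult.commute)

lemma lin_eval_lift: "lin_eval (lift_vec a) (lift_vec x) = to_ac (lin_eval a x)"
  unfolding lin_eval_def by (simp add: to_ac_sum)

subsection \<open>Expansions of cubic and quadratic forms along lines\<close>

text \<open>For a point x and a direction v, the cubic F satisfies
  F(s x + t v) = s^3 F(x) + s^2 t dF_x(v) + s t^2 G_x(v) + t^3 F(v), where dF_x is the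
  derivative of F at x and G_x (the "mixed term") is a quadratic form in v.  These identities are first
  checked monomial by monomial.\<close>

definition monom_val :: "(4 \<Rightarrow> nat) \<Rightarrow> (4 \<Rightarrow> 'a::comm_ring_1) \<Rightarrow> 'a" where
  "monom_val e x = (\<Prod>i\<in>UNIV. x i ^ e i)"

definition monom_dir :: "(4 \<Rightarrow> nat) \<Rightarrow> (4 \<Rightarrow> 'a::comm_ring_1) \<Rightarrow> (4 \<Rightarrow> 'a) \<Rightarrow> 'a" where
  "monom_dir e x v = (\<Sum>i\<in>UNIV. of_nat (e i) * (\<Prod>j\<in>UNIV. x j ^ ((e(i := e i - 1)) j)) * v i)"

definition monom_mixed :: "(4 \<Rightarrow> nat) \<Rightarrow> (4 \<Rightarrow> 'a::comm_ring_1) \<Rightarrow> (4 \<Rightarrow> 'a) \<Rightarrow> 'a" where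
  "monom_mixed e x v = monom_val e (lincomb 1 x 1 v) - monom_val e x - monom_dir e x v - monom_val e v"

definition monom_polar :: "(4 \<Rightarrow> nat) \<Rightarrow> (4 \<Rightarrow> 'a::comm_ring_1) \<Rightarrow> (4 \<Rightarrow> 'a) \<Rightarrow> 'a" where
  "monom_polar e x y = monom_val e (lincomb 1 x 1 y) - monom_val e x - monom_val e y"

lemma monom_val_expand: "monom_val e x = x 0 ^ e 0 * x 1 ^ e 1 * x 2 ^ e 2 * x 3 ^ e 3"
  unfolding monom_val_def prod_4 ..

lemma monom_dir_expand: "monom_dir e x v =
   of_nat (e 0) * (x 0 ^ (e 0 - 1) * x 1 ^ e 1 * x 2 ^ e 2 * x 3 ^ e 3) * v 0 +
   of_nat (e 1) * (x 0 ^ e 0 * x 1 ^ (e 1 - 1) * x 2 ^ e 2 * x 3 ^ e 3) * v 1 +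
   of_nat (e 2) * (x 0 ^ e 0 * x 1 ^ e 1 * x 2 ^ (e 2 - 1) * x 3 ^ e 3) * v 2 +
   of_nat (e 3) * (x 0 ^ e 0 * x 1 ^ e 1 * x 2 ^ e 2 * x 3 ^ (e 3 - 1)) * v 3"
  unfolding monom_dir_def prod_4 sum_4 by simp

lemma monom_cubic_expand:
  fixes x v :: "4 \<Rightarrow> 'a::field"
  assumes "sum e UNIV = 3"
  shows "monom_val e (lincomb s x t v) =
    s^3 * monom_val e x + s^2*t * monom_dir e x v + s*t^2 * monom_mixed e x v + t^3 * monom_val e v"
proof -
  have "e 0 + e 1 + e 2 + e 3 = 3" using assms by (simp add: sum_4)
  thus ?thesis unfolding monom_mixed_def
    by (rule exponents_deg3_cases)
      (simp_all add: monom_val_expand monom_dir_expand lincomb_def algebra_simps power2_eq_square power3_eq_cube)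
qed

lemma monom_mixed_quadratic:
  fixes x u w :: "4 \<Rightarrow> 'a::field"
  assumes "sum e UNIV = 3"
  shows "monom_mixed e x (lincomb b u g w) = b^2 * monom_mixed e x u +
    b*g * (monom_mixed e x (lincomb 1 u 1 w) - monom_mixed e x u - monom_mixed e x w) + g^2 * monom_mixed e x w"
proof -
  have "e 0 + e 1 + e 2 + e 3 = 3" using assms by (simp add: sum_4)
  thus ?thesis unfolding monom_mixed_def
    by (rule exponents_deg3_cases)
      (simp_all add: monom_val_expand monom_dir_expand lincomb_def algebra_simps power2_eq_square power3_eq_cube)
qed

lemma monom_mixed_self:
  fixes x v :: "4 \<Rightarrow> 'a::field"
  assumes "sum e UNIV = 3"
  shows "monom_mixed e x (lincomb a x b v) = 3*a^2 * monom_val e x + 2*a*b * monom_dir e x v + b^2 * monom_mixed e x v"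
proof -
  have "e 0 + e 1 + e 2 + e 3 = 3" using assms by (simp add: sum_4)
  thus ?thesis unfolding monom_mixed_def
    by (rule exponents_deg3_cases)
      (simp_all add: monom_val_expand monom_dir_expand lincomb_def algebra_simps power2_eq_square power3_eq_cube)
qed

lemma monom_quad_expand:
  fixes x y :: "4 \<Rightarrow> 'a::field"
  assumes "sum e UNIV = 2"
  shows "monom_val e (lincomb a x b y) = a^2 * monom_val e x + a*b * monom_polar e x y + b^2 * monom_val e y"
proof -
  have "e 0 + e 1 + e 2 + e 3 = 2" using assms by (simp add: sum_4)
  thus ?thesis unfolding monom_polar_def
    by (rule exponents_deg2_cases) (simp_all add: monom_val_expand lincomb_def algebra_simps power2_eq_square)
qed

lemma monom_polar_linear:
  fixes x u w :: "4 \<Rightarrow> 'a::field"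
  assumes "sum e UNIV = 2"
  shows "monom_polar e x (lincomb b u g w) = b * monom_polar e x u + g * monom_polar e x w"
proof -
  have "e 0 + e 1 + e 2 + e 3 = 2" using assms by (simp add: sum_4)
  thus ?thesis unfolding monom_polar_def
    by (rule exponents_deg2_cases) (simp_all add: monom_val_expand lincomb_def algebra_simps power2_eq_square)
qed

definition cubic_dir :: "((4 \<Rightarrow> nat) \<Rightarrow> 'a::field) \<Rightarrow> (4 \<Rightarrow> 'a) \<Rightarrow> (4 \<Rightarrow> 'a) \<Rightarrow> 'a" where
  "cubic_dir C x v = (\<Sum>i\<in>UNIV. form_deriv 3 C i x * v i)"

definition cubic_mixed :: "((4 \<Rightarrow> nat) \<Rightarrow> 'a::field) \<Rightarrow> (4 \<Rightarrow> 'a) \<Rightarrow> (4 \<Rightarrow> 'a) \<Rightarrow> 'a" where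
  "cubic_mixed C x v = form_eval 3 C (lincomb 1 x 1 v) - form_eval 3 C x - cubic_dir C x v - form_eval 3 C v"

definition quad_polar :: "((4 \<Rightarrow> nat) \<Rightarrow> 'a::field) \<Rightarrow> (4 \<Rightarrow> 'a) \<Rightarrow> (4 \<Rightarrow> 'a) \<Rightarrow> 'a" where
  "quad_polar C x y = form_eval 2 C (lincomb 1 x 1 y) - form_eval 2 C x - form_eval 2 C y"

lemma form_eval_monoms: "form_eval d C x = (\<Sum>e\<in>monoms d. C e * monom_val e x)"
  unfolding form_eval_def monom_val_def ..

lemma cubic_dir_monoms: "cubic_dir C x v = (\<Sum>e\<in>monoms 3. C e * monom_dir e x v)"
  unfolding cubic_dir_def form_deriv_def monom_dir_def
  by (simp add: sum_distrib_left sum_distrib_right sum.swap[of _ UNIV] mult_ac)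

lemma cubic_mixed_monoms: "cubic_mixed C x v = (\<Sum>e\<in>monoms 3. C e * monom_mixed e x v)"
  unfolding cubic_mixed_def monom_mixed_def form_eval_monoms cubic_dir_monoms
  by (simp add: sum_subtractf right_diff_distrib)

lemma quad_polar_monoms: "quad_polar C x y = (\<Sum>e\<in>monoms 2. C e * monom_polar e x y)"
  unfolding quad_polar_def monom_polar_def form_eval_monoms by (simp add: sum_subtractf right_diff_distrib)

lemma cubic_dir_lin_eval: "cubic_dir C x v = lin_eval (\<lambda>i. form_deriv 3 C i x) v"
  unfolding cubic_dir_def lin_eval_def ..

lemma sum_lin3: "(\<Sum>e\<in>A. C e * (a1 * p1 e + a2 * p2 e + a3 * p3 e)) =
   a1 * (\<Sum>e\<in>A. C e * p1 e) + a2 * (\<Sum>e\<in>A. C e * p2 e) + a3 * (\<Sum>e\<in>A. C e * p3 e)"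
  for C :: "_ \<Rightarrow> 'a::comm_ring_1"
  by (simp add: distrib_left sum.distrib sum_distrib_left mult.left_commute)

lemma cubic_expand: "form_eval 3 C (lincomb s x t v) =
  s^3 * form_eval 3 C x + s^2*t * cubic_dir C x v + s*t^2 * cubic_mixed C x v + t^3 * form_eval 3 C v"
proof -
  have "form_eval 3 C (lincomb s x t v) = (\<Sum>e\<in>monoms 3. C e *
      (s^3 * monom_val e x + s^2*t * monom_dir e x v + s*t^2 * monom_mixed e x v + t^3 * monom_val e v))"
    unfolding form_eval_monoms by (rule sum.cong) (auto simp: monom_cubic_expand monoms_def)
  thus ?thesis unfolding form_eval_monoms cubic_dir_monoms cubic_mixed_monoms
    by (simp add: distrib_left sum.distrib sum_distrib_left mult_ac)
qed

lemma cubic_dir_linear: "cubic_dir C x (lincomb b u g w) = b * cubic_dir C x u + g * cubic_dir C x w"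
  unfolding cubic_dir_def lincomb_def
  by (simp add: distrib_left sum.distrib sum_distrib_left mult.left_commute)

lemma cubic_mixed_quadratic: "cubic_mixed C x (lincomb b u g w) = b^2 * cubic_mixed C x u +
    b*g * (cubic_mixed C x (lincomb 1 u 1 w) - cubic_mixed C x u - cubic_mixed C x w) + g^2 * cubic_mixed C x w"
proof -
  have "cubic_mixed C x (lincomb b u g w) = (\<Sum>e\<in>monoms 3. C e * ((b^2 - b*g) * monom_mixed e x u +
      (b*g) * monom_mixed e x (lincomb 1 u 1 w) + (g^2 - b*g) * monom_mixed e x w))"
    unfolding cubic_mixed_monoms
  proof (rule sum.cong[OF refl])
    fix e assume "e \<in> monoms 3"
    hence "sum e UNIV = 3" by (simp add: monoms_def)
    thus "C e * monom_mixed e x (lincomb b u g w) = C e * ((b^2 - b*g) * monom_mixed e x u +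
        (b*g) * monom_mixed e x (lincomb 1 u 1 w) + (g^2 - b*g) * monom_mixed e x w)"
      by (subst monom_mixed_quadratic) (simp_all add: algebra_simps)
  qed
  also have "\<dots> = (b^2 - b*g) * cubic_mixed C x u + (b*g) * cubic_mixed C x (lincomb 1 u 1 w) +
      (g^2 - b*g) * cubic_mixed C x w"
    unfolding sum_lin3 cubic_mixed_monoms ..
  finally show ?thesis by (simp add: algebra_simps)
qed

lemma cubic_mixed_self: "cubic_mixed C x (lincomb a x b v) =
    3*a^2 * form_eval 3 C x + 2*a*b * cubic_dir C x v + b^2 * cubic_mixed C x v"
proof -
  have "cubic_mixed C x (lincomb a x b v) = (\<Sum>e\<in>monoms 3. C e *
      ((3*a^2) * monom_val e x + (2*a*b) * monom_dir e x v + b^2 * monom_mixed e x v))"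
    unfolding cubic_mixed_monoms by (rule sum.cong) (auto simp: monom_mixed_self monoms_def)
  thus ?thesis unfolding sum_lin3 cubic_mixed_monoms form_eval_monoms cubic_dir_monoms .
qed

lemma quad_expand: "form_eval 2 C (lincomb a x b y) =
    a^2 * form_eval 2 C x + a*b * quad_polar C x y + b^2 * form_eval 2 C y"
proof -
  have "form_eval 2 C (lincomb a x b y) = (\<Sum>e\<in>monoms 2. C e *
      (a^2 * monom_val e x + (a*b) * monom_polar e x y + b^2 * monom_val e y))"
    unfolding form_eval_monoms by (rule sum.cong) (auto simp: monom_quad_expand monoms_def)
  thus ?thesis unfolding sum_lin3 quad_polar_monoms form_eval_monoms .
qed

lemma quad_polar_linear: "quad_polar C x (lincomb b u g w) = b * quad_polar C x u + g * quad_polar C x w"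
proof -
  have "quad_polar C x (lincomb b u g w) = (\<Sum>e\<in>monoms 2. C e * (b * monom_polar e x u + g * monom_polar e x w))"
    unfolding quad_polar_monoms by (rule sum.cong) (auto simp: monom_polar_linear monoms_def)
  thus ?thesis unfolding quad_polar_monoms
    by (simp add: distrib_left sum.distrib sum_distrib_left mult.left_commute)
qed

lemma quad_polar_sym: "quad_polar C x y = quad_polar C y x"
  unfolding quad_polar_def lincomb_def by (simp add: add.commute)

lemma quad_polar_self: "quad_polar C x x = 2 * form_eval 2 C x"
proof -
  have e: "lincomb 1 x 1 x = lincomb 2 x 0 x" unfolding lincomb_def by (simp add: fun_eq_iff)
  have "form_eval 2 C (lincomb 1 x 1 x) = form_eval 2 C x + quad_polar C x x + form_eval 2 C x"
    using quad_expand[of C 1 x 1 x] by simp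
  moreover have "form_eval 2 C (lincomb 2 x 0 x) = 4 * form_eval 2 C x"
    using quad_expand[of C 2 x 0 x] by simp
  ultimately show ?thesis unfolding e by (simp add: algebra_simps)
qed

lemma quad_polar_coord: "quad_polar C x v = lin_eval (\<lambda>i. quad_polar C x (unitv i)) v"
proof -
  have "quad_polar C x v = quad_polar C x
      (lincomb (v 0) (unitv 0) 1 (lincomb (v 1) (unitv 1) 1 (lincomb (v 2) (unitv 2) (v 3) (unitv 3))))"
    by (subst vec_decomp[of v]) (rule refl)
  also have "\<dots> = v 0 * quad_polar C x (unitv 0) + (v 1 * quad_polar C x (unitv 1) +
      (v 2 * quad_polar C x (unitv 2) + v 3 * quad_polar C x (unitv 3)))"
    by (simp only: quad_polar_linear mult_1)
  finally show ?thesis unfolding lin_eval_coord sum_4 by (simp add: add.assoc)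
qed

lemma lincomb_scale: "lincomb \<kappa> x 0 x = (\<lambda>i. \<kappa> * x i)"
  unfolding lincomb_def by simp

lemma quad_scale:
  fixes C :: "(4 \<Rightarrow> nat) \<Rightarrow> 'a::field"
  shows "form_eval 2 C (\<lambda>i. \<kappa> * x i) = \<kappa>^2 * form_eval 2 C x"
  using quad_expand[of C \<kappa> x 0 x] unfolding lincomb_scale by simp

lemma quad_polar_scale: "quad_polar C (\<lambda>i. \<kappa> * x i) y = \<kappa> * quad_polar C x y"
  using quad_polar_linear[of C y \<kappa> x 0 x] unfolding lincomb_scale by (simp add: quad_polar_sym)

lemma lin_eval_scale: "lin_eval d (\<lambda>i. \<kappa> * x i) = \<kappa> * lin_eval d x"
  using lin_eval_lincomb[of d \<kappa> x 0 x] unfolding lincomb_scale by simp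

lemma form_eval_lift: "form_eval d (lift_coeffs c) (lift_vec x) = to_ac (form_eval d c x)"
  unfolding form_eval_def by (simp add: to_ac_sum to_ac_prod)

lemma form_deriv_lift: "form_deriv d (lift_coeffs c) i (lift_vec x) = to_ac (form_deriv d c i x)"
  unfolding form_deriv_def by (simp add: to_ac_sum to_ac_prod)

lemma quad_polar_lift: "quad_polar (lift_coeffs c) (lift_vec x) (lift_vec y) = to_ac (quad_polar c x y)"
proof -
  have "lincomb 1 (lift_vec x) 1 (lift_vec y) = lift_vec (lincomb 1 x 1 y)"
    unfolding lincomb_def by simp
  thus ?thesis unfolding quad_polar_def by (simp add: form_eval_lift)
qed

lemma quad_polar_rational:
  "quad_polar (lift_coeffs q) (lift_vec z) x = lin_eval (lift_vec (\<lambda>i. quad_polar q z (unitv i))) x"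
  by (subst quad_polar_coord) (simp only: quad_polar_lift[symmetric] unitv_lift)

subsection \<open>Lines and planes in 4-space\<close>

text \<open>Four vectors in a hyperplane {x. d x = 0} (with d \<noteq> 0) are linearly dependent:
  the hyperplane has dimension at most 3.\<close>

lemma hyperplane_four_dependent:
  fixes d x1 x2 x3 x4 :: "4 \<Rightarrow> 'a::field"
  assumes dk: "d k \<noteq> 0"
    and h: "lin_eval d x1 = 0" "lin_eval d x2 = 0" "lin_eval d x3 = 0" "lin_eval d x4 = 0"
  shows "\<exists>a1 a2 a3 a4. (a1 \<noteq> 0 \<or> a2 \<noteq> 0 \<or> a3 \<noteq> 0 \<or> a4 \<noteq> 0) \<and>
           (\<forall>i. a1 * x1 i + a2 * x2 i + a3 * x3 i + a4 * x4 i = 0)"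
proof (cases "x1 = x2 \<or> x1 = x3 \<or> x1 = x4 \<or> x2 = x3 \<or> x2 = x4 \<or> x3 = x4")
  case True
  thus ?thesis
  proof (elim disjE)
    assume "x1 = x2" thus ?thesis by (intro exI[of _ 1] exI[of _ "-1"] exI[of _ 0]) simp
  next
    assume "x1 = x3" thus ?thesis by (intro exI[of _ 1] exI[of _ 0] exI[of _ "-1"] exI[of _ 0]) simp
  next
    assume "x1 = x4" thus ?thesis by (intro exI[of _ 1] exI[of _ 0] exI[of _ 0] exI[of _ "-1"]) simp
  next
    assume "x2 = x3" thus ?thesis by (intro exI[of _ 0] exI[of _ 1] exI[of _ "-1"] exI[of _ 0]) simp
  next
    assume "x2 = x4" thus ?thesis by (intro exI[of _ 0] exI[of _ 1] exI[of _ 0] exI[of _ "-1"]) simp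
  next
    assume "x3 = x4" thus ?thesis by (intro exI[of _ 0] exI[of _ 0] exI[of _ 1] exI[of _ "-1"]) simp
  qed
next
  case False
  define V :: "(4 \<Rightarrow> 'a) \<Rightarrow> 'a^4" where "V = (\<lambda>x. vec_lambda x)"
  have V_inj: "V x = V y \<longleftrightarrow> x = y" for x y unfolding V_def by (simp add: vec_lambda_inject)
  have V_nth: "V x $ i = x i" for x i unfolding V_def by simp
  define S where "S = {v::'a^4. (\<Sum>i\<in>UNIV. d i * v $ i) = 0}"
  have "vec.subspace S"
    unfolding vec.subspace_def S_def
    by (simp add: distrib_left sum.distrib mult.left_commute flip: sum_distrib_left)
  hence "vec.span S = S" by (rule vec.span_eq_iff[THEN iffD2])
  moreover have "axis k 1 \<notin> S"
    unfolding S_def using dk by (simp add: axis_def if_distrib cong: if_cong)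
  ultimately have "vec.span S \<subset> vec.span (UNIV :: ('a^4) set)"
    unfolding vec.span_UNIV by blast
  hence "vec.dim S < vec.dim (UNIV :: ('a^4) set)" by (rule vec.dim_psubset)
  hence dimS: "vec.dim S < 4" using vec_dim_card[where 'a='a and 'n=4] by simp
  define B where "B = {V x1, V x2, V x3, V x4}"
  have cardB: "card B = 4" using False unfolding B_def by (simp add: V_inj)
  have BS: "B \<subseteq> S" using h unfolding B_def S_def lin_eval_def by (simp add: V_nth)
  have "vec.dependent B"
  proof (rule ccontr)
    assume "\<not> vec.dependent B"
    from vec.independent_card_le_dim[OF BS this] cardB dimS show False by simp
  qed
  then obtain u where u: "\<exists>v\<in>B. u v \<noteq> 0" "(\<Sum>v\<in>B. u v *s v) = 0"
    using vec.dependent_finite[of B] unfolding B_def by auto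
  have sumB: "(\<Sum>v\<in>B. u v *s v) = u (V x1) *s V x1 + u (V x2) *s V x2 + u (V x3) *s V x3 + u (V x4) *s V x4"
    using False unfolding B_def by (simp add: V_inj add.assoc)
  show ?thesis
  proof (intro exI conjI allI)
    show "u (V x1) \<noteq> 0 \<or> u (V x2) \<noteq> 0 \<or> u (V x3) \<noteq> 0 \<or> u (V x4) \<noteq> 0"
      using u(1) unfolding B_def by auto
    fix i
    have "(\<Sum>v\<in>B. u v *s v) $ i = 0" using u(2) by simp
    thus "u (V x1) * x1 i + u (V x2) * x2 i + u (V x3) * x3 i + u (V x4) * x4 i = 0"
      unfolding sumB by (simp add: V_nth)
  qed
qed

lemma span2_lincomb: "x \<in> span2 u w \<Longrightarrow> y \<in> span2 u w \<Longrightarrow> lincomb s x t y \<in> span2 u w"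
proof -
  assume "x \<in> span2 u w" "y \<in> span2 u w"
  then obtain a b a' b' where "x = (\<lambda>i. a * u i + b * w i)" "y = (\<lambda>i. a' * u i + b' * w i)"
    unfolding span2_def by blast
  thus ?thesis unfolding span2_def lincomb_def
    by (intro CollectI exI[of _ "s*a + t*a'"] exI[of _ "s*b + t*b'"]) (simp add: fun_eq_iff algebra_simps)
qed

lemma span2_left: "u \<in> span2 u w"
  unfolding span2_def by (rule CollectI, rule exI[of _ 1], rule exI[of _ 0]) simp

lemma span2_right: "w \<in> span2 u w"
  unfolding span2_def by (rule CollectI, rule exI[of _ 0], rule exI[of _ 1]) simp

lemma span2_in_span2: "lincomb s u t w \<in> span2 u w"
  by (rule span2_lincomb[OF span2_left span2_right])

lemma span2_subset: "x \<in> span2 u w \<Longrightarrow> y \<in> span2 u w \<Longrightarrow> span2 x y \<subseteq> span2 u w"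
proof
  fix z assume "x \<in> span2 u w" "y \<in> span2 u w" "z \<in> span2 x y"
  then obtain a b where "z = lincomb a x b y" unfolding span2_def lincomb_def by blast
  thus "z \<in> span2 u w" using span2_lincomb \<open>x \<in> span2 u w\<close> \<open>y \<in> span2 u w\<close> by blast
qed

lemma line_through_point:
  fixes Q :: "4 \<Rightarrow> 'a::field"
  assumes "is_line L" "Q \<in> L" "nonzero_vec Q"
  obtains v where "lin_indep2 Q v" "L = span2 Q v"
proof -
  obtain u w where uw: "lin_indep2 u w" "L = span2 u w" using assms(1) unfolding is_line_def by blast
  obtain a b where Q: "Q = lincomb a u b w" using assms(2) uw(2) unfolding span2_def lincomb_def by blast
  have ab: "a \<noteq> 0 \<or> b \<noteq> 0" using assms(3) Q unfolding nonzero_vec_def lincomb_def by auto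
  text \<open>Exchange Q for a basis vector with nonzero coefficient.\<close>
  have exchange: "\<exists>v. lin_indep2 Q v \<and> span2 Q v = span2 u w"
    if indep: "lin_indep2 u w" and Q: "Q = lincomb a u b w" and a: "a \<noteq> 0" for u w a b
  proof (intro exI conjI)
    show "lin_indep2 Q w" unfolding lin_indep2_def
    proof (intro allI impI)
      fix \<alpha> \<beta> assume "\<forall>i. \<alpha> * Q i + \<beta> * w i = 0"
      hence "\<forall>i. (\<alpha>*a) * u i + (\<alpha>*b + \<beta>) * w i = 0" unfolding Q lincomb_def by (simp add: algebra_simps)
      hence "\<alpha>*a = 0 \<and> \<alpha>*b + \<beta> = 0" using indep unfolding lin_indep2_def by blast
      thus "\<alpha> = 0 \<and> \<beta> = 0" using a by auto
    qed
    have "u = lincomb (1/a) Q (-b/a) w" unfolding Q lincomb_def using a by (simp add: fun_eq_iff field_simps)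
    hence "u \<in> span2 Q w" using span2_in_span2 by metis
    hence "span2 u w \<subseteq> span2 Q w" by (rule span2_subset[OF _ span2_right])
    moreover have "span2 Q w \<subseteq> span2 u w" unfolding Q by (rule span2_subset[OF span2_in_span2 span2_right])
    ultimately show "span2 Q w = span2 u w" by blast
  qed
  show thesis
  proof (cases "a \<noteq> 0")
    case True
    then obtain v where "lin_indep2 Q v" "span2 Q v = span2 u w" using exchange[OF uw(1) Q] by blast
    thus thesis using that uw(2) by simp
  next
    case False
    hence "b \<noteq> 0" using ab by simp
    moreover have "lin_indep2 w u" using uw(1) unfolding lin_indep2_def by (metis add.commute)
    moreover have "Q = lincomb b w a u" unfolding Q lincomb_def by (simp add: add.commute)
    ultimately obtain v where "lin_indep2 Q v" "span2 Q v = span2 w u" using exchange by blast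
    moreover have "span2 w u = span2 u w"
      by (intro equalityI span2_subset span2_left span2_right)
    ultimately show thesis using that uw(2) by simp
  qed
qed

lemma span2_eq_if_dependent:
  fixes Q y1 y2 :: "4 \<Rightarrow> 'a::field"
  assumes i1: "lin_indep2 Q y1" and i2: "lin_indep2 Q y2"
    and h: "\<forall>i. a*Q i + b*y1 i + g*y2 i = 0" and nz: "a \<noteq> 0 \<or> b \<noteq> 0 \<or> g \<noteq> 0"
  shows "span2 Q y1 = span2 Q y2"
proof -
  have g: "g \<noteq> 0"
  proof
    assume "g = 0"
    hence "\<forall>i. a * Q i + b * y1 i = 0" using h by simp
    hence "a = 0 \<and> b = 0" using i1 unfolding lin_indep2_def by blast
    thus False using nz \<open>g = 0\<close> by simp
  qed
  have b: "b \<noteq> 0"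
  proof
    assume "b = 0"
    hence "\<forall>i. a * Q i + g * y2 i = 0" using h by simp
    hence "a = 0 \<and> g = 0" using i2 unfolding lin_indep2_def by blast
    thus False using nz \<open>b = 0\<close> by simp
  qed
  have "y2 = lincomb (-a/g) Q (-b/g) y1" using h g by (rule lincomb_solve)
  hence "span2 Q y2 \<subseteq> span2 Q y1" using span2_subset[OF span2_left] span2_in_span2 by metis
  moreover have "\<forall>i. a*Q i + g*y2 i + b*y1 i = 0" using h by (simp add: algebra_simps)
  hence "y1 = lincomb (-a/b) Q (-g/b) y2" using b by (rule lincomb_solve)
  hence "span2 Q y1 \<subseteq> span2 Q y2" using span2_subset[OF span2_left] span2_in_span2 by metis
  ultimately show ?thesis by blast
qed

lemma coplanar_lines_not_skew:
  fixes d u w u' w' :: "4 \<Rightarrow> 'a::field"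
  assumes dk: "d k \<noteq> 0" and i: "lin_indep2 u w" "lin_indep2 u' w'"
    and h: "lin_eval d u = 0" "lin_eval d w = 0" "lin_eval d u' = 0" "lin_eval d w' = 0"
  shows "\<not> skew (span2 u w) (span2 u' w')"
proof -
  obtain a1 a2 a3 a4 where nz: "a1 \<noteq> 0 \<or> a2 \<noteq> 0 \<or> a3 \<noteq> 0 \<or> a4 \<noteq> 0"
    and rel: "\<forall>i. a1 * u i + a2 * w i + a3 * u' i + a4 * w' i = 0"
    using hyperplane_four_dependent[OF dk h] by blast
  define x where "x = lincomb a1 u a2 w"
  have "x = lincomb (-a3) u' (-a4) w'" unfolding x_def lincomb_def
  proof
    fix i
    have "a1 * u i + a2 * w i + a3 * u' i + a4 * w' i = 0" using rel by blast
    thus "a1 * u i + a2 * w i = - a3 * u' i + - a4 * w' i" by (simp add: algebra_simps eq_neg_iff_add_eq_0)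
  qed
  hence "x \<in> span2 u' w'" by (simp only: span2_in_span2)
  moreover have "x \<in> span2 u w" unfolding x_def by (rule span2_in_span2)
  ultimately have in_both: "x \<in> span2 u w" "x \<in> span2 u' w'" by blast+
  have "nonzero_vec x"
  proof (rule ccontr)
    assume "\<not> nonzero_vec x"
    hence z: "\<forall>i. a1 * u i + a2 * w i = 0" unfolding nonzero_vec_def x_def lincomb_def by simp
    hence "a1 = 0 \<and> a2 = 0" using i(1) unfolding lin_indep2_def by blast
    moreover have "\<forall>i. a3 * u' i + a4 * w' i = 0" using rel z by (metis add.assoc add_0)
    hence "a3 = 0 \<and> a4 = 0" using i(2) unfolding lin_indep2_def by blast
    ultimately show False using nz by simp
  qed
  thus ?thesis unfolding skew_def using in_both by blast
qed

subsection \<open>Lines on a cubic surface\<close>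

lemma exists_not_0_1: "\<exists>x::'a::alg_closed_field. x \<noteq> 0 \<and> x \<noteq> 1"
proof -
  define f :: "nat \<Rightarrow> 'a" where "f = (\<lambda>i. if i = 0 then 1 else if i = 1 then -1 else 1)"
  have "\<exists>x. (\<Sum>k\<le>2. f k * x ^ k) = 0" by (rule alg_closed) (auto simp: f_def)
  then obtain x where "(\<Sum>k\<le>2. f k * x ^ k) = 0" by blast
  hence "1 - x + x^2 = 0" by (simp add: f_def numeral_2_eq_2)
  hence "x \<noteq> 0 \<and> x \<noteq> 1" by auto
  thus ?thesis by blast
qed

text \<open>Two binary cubic forms that agree everywhere have the same coefficients (the field
  has an element other than 0 and 1, which is all that is needed).\<close>

lemma binary_cubic_coeffs_eq:
  fixes a0 a1 a2 a3 b0 b1 b2 b3 :: "'a::alg_closed_field"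
  assumes h: "\<And>s t. s^3*a0 + s^2*t*a1 + s*t^2*a2 + t^3*a3 = s^3*b0 + s^2*t*b1 + s*t^2*b2 + t^3*b3"
  shows "a0 = b0 \<and> a1 = b1 \<and> a2 = b2 \<and> a3 = b3"
proof -
  obtain x :: 'a where x: "x \<noteq> 0" "x \<noteq> 1" using exists_not_0_1 by blast
  have 0: "a0 = b0" using h[of 1 0] by simp
  have 3: "a3 = b3" using h[of 0 1] by simp
  have e1: "a1 + a2 = b1 + b2" using h[of 1 1] 0 3 by simp
  have "x * (a1 + x * a2) = x * (b1 + x * b2)"
    using h[of 1 x] 0 3 by (simp add: algebra_simps power2_eq_square power3_eq_cube)
  hence e2: "a1 + x * a2 = b1 + x * b2" using x by simp
  have "(x - 1) * (a2 - b2) = (a1 + x*a2) - (a1 + a2) - ((b1 + x*b2) - (b1 + b2))" by (simp add: algebra_simps)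
  also have "\<dots> = 0" using e1 e2 by simp
  finally have "a2 = b2" using x by simp
  thus ?thesis using 0 3 e1 by simp
qed

definition surface_line :: "((4 \<Rightarrow> nat) \<Rightarrow> 'a::field) \<Rightarrow> (4 \<Rightarrow> 'a) set \<Rightarrow> bool" where
  "surface_line C L \<longleftrightarrow> is_line L \<and> (\<forall>x\<in>L. form_eval 3 C x = 0)"

lemma line_on_iff: "line_on c L \<longleftrightarrow> surface_line (lift_coeffs c) L"
  unfolding line_on_def surface_line_def cubicF_def ..

lemma surface_line_coeffs:
  fixes C :: "(4 \<Rightarrow> nat) \<Rightarrow> 'a::alg_closed_field"
  assumes L: "surface_line C L" and "Q \<in> L" "v \<in> L"
  shows "form_eval 3 C Q = 0 \<and> cubic_dir C Q v = 0 \<and> cubic_mixed C Q v = 0 \<and> form_eval 3 C v = 0"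
proof -
  obtain u w where L_eq: "L = span2 u w" using L unfolding surface_line_def is_line_def by blast
  have "s^3 * form_eval 3 C Q + s^2*t * cubic_dir C Q v + s*t^2 * cubic_mixed C Q v + t^3 * form_eval 3 C v
       = s^3 * 0 + s^2*t * 0 + s*t^2 * 0 + t^3 * 0" for s t
  proof -
    have "lincomb s Q t v \<in> L" using \<open>Q \<in> L\<close> \<open>v \<in> L\<close> unfolding L_eq by (rule span2_lincomb)
    hence "form_eval 3 C (lincomb s Q t v) = 0" using L unfolding surface_line_def by blast
    thus ?thesis by (simp add: cubic_expand)
  qed
  from binary_cubic_coeffs_eq[OF this] show ?thesis by simp
qed

lemma smooth_cubic_nonsingular:
  assumes "smooth_cubic c" "nonzero_vec x" "cubicF c x = 0"
  obtains k where "form_deriv 3 (lift_coeffs c) k x \<noteq> 0"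
  using assms unfolding smooth_cubic_def cubicF_deriv_def by blast

lemma tangent_plane_at_K_point:
  fixes c :: "(4 \<Rightarrow> nat) \<Rightarrow> 'k::field"
  assumes "smooth_cubic c" "nonzero_vec P" "cubicF c (lift_vec P) = 0"
  obtains dK :: "4 \<Rightarrow> 'k" and k where "dK k \<noteq> 0"
    and "tangent_plane c (lift_vec P) = {x. lin_eval (lift_vec dK) x = 0}"
proof -
  define dK where "dK = (\<lambda>i. form_deriv 3 c i P)"
  have "nonzero_vec (lift_vec P)" using assms(2) unfolding nonzero_vec_def by simp
  then obtain k where "form_deriv 3 (lift_coeffs c) k (lift_vec P) \<noteq> 0"
    using smooth_cubic_nonsingular assms(1,3) by blast
  hence "dK k \<noteq> 0" unfolding dK_def by (simp add: form_deriv_lift)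
  moreover have "tangent_plane c (lift_vec P) = {x. lin_eval (lift_vec dK) x = 0}"
    unfolding tangent_plane_def dK_def lin_eval_def cubicF_deriv_def by (simp add: form_deriv_lift)
  ultimately show thesis by (rule that)
qed

lemma tangent_section_data:
  fixes c :: "(4 \<Rightarrow> nat) \<Rightarrow> 'k::field"
  assumes "smooth_cubic c" "nonzero_vec P" "line_on c l" "lift_vec P \<in> l"
    and "gamma_line_plus_irred_conic c l P"
  obtains dK :: "4 \<Rightarrow> 'k" and k and a :: "4 \<Rightarrow> 'k" and q :: "(4 \<Rightarrow> nat) \<Rightarrow> 'k"
  where "dK k \<noteq> 0" and "tangent_plane c (lift_vec P) = {x. lin_eval (lift_vec dK) x = 0}"
    and "\<And>x. lin_eval (lift_vec dK) x = 0 \<Longrightarrow>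
           form_eval 3 (lift_coeffs c) x = lin_eval (lift_vec a) x * form_eval 2 (lift_coeffs q) x"
    and "l = {x. lin_eval (lift_vec dK) x = 0 \<and> lin_eval (lift_vec a) x = 0}"
    and "\<not> (\<exists>b b' :: 4 \<Rightarrow> 'k. \<forall>x. lin_eval (lift_vec dK) x = 0 \<longrightarrow>
           form_eval 2 (lift_coeffs q) x = lin_eval (lift_vec b) x * lin_eval (lift_vec b') x)"
proof -
  have "cubicF c (lift_vec P) = 0" using assms(3,4) unfolding line_on_def by blast
  then obtain dK :: "4 \<Rightarrow> 'k" and k where dk: "dK k \<noteq> 0"
    and Pi: "tangent_plane c (lift_vec P) = {x. lin_eval (lift_vec dK) x = 0}"
    using tangent_plane_at_K_point[OF assms(1,2)] by blast
  obtain a q where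
    split: "\<forall>x\<in>tangent_plane c (lift_vec P). cubicF c x = lin_eval (lift_vec a) x * form_eval 2 (lift_coeffs q) x"
    and l_eq: "l = {x\<in>tangent_plane c (lift_vec P). lin_eval (lift_vec a) x = 0}"
    and irred: "\<not> (\<exists>b b' :: 4 \<Rightarrow> 'k. \<forall>x\<in>tangent_plane c (lift_vec P).
              form_eval 2 (lift_coeffs q) x = lin_eval (lift_vec b) x * lin_eval (lift_vec b') x)"
    using assms(5) unfolding gamma_line_plus_irred_conic_def Let_def by blast
  show thesis
  proof (rule that[of dK k a q, OF dk Pi])
    show "form_eval 3 (lift_coeffs c) x = lin_eval (lift_vec a) x * form_eval 2 (lift_coeffs q) x"
      if "lin_eval (lift_vec dK) x = 0" for x
      using split that unfolding Pi cubicF_def by blast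
    show "l = {x. lin_eval (lift_vec dK) x = 0 \<and> lin_eval (lift_vec a) x = 0}"
      using l_eq unfolding Pi by blast
    show "\<not> (\<exists>b b' :: 4 \<Rightarrow> 'k. \<forall>x. lin_eval (lift_vec dK) x = 0 \<longrightarrow>
           form_eval 2 (lift_coeffs q) x = lin_eval (lift_vec b) x * lin_eval (lift_vec b') x)"
      using irred unfolding Pi by blast
  qed
qed

lemma line_in_tangent_plane_meets:
  fixes C :: "(4 \<Rightarrow> nat) \<Rightarrow> 'a::alg_closed_field"
  assumes sing: "form_deriv 3 C k Q \<noteq> 0" and L': "surface_line C L'" "Q \<in> L'"
    and L: "is_line L" "\<forall>x\<in>L. cubic_dir C Q x = 0"
  shows "\<not> skew L L'"
proof -
  obtain u w where L_eq: "lin_indep2 u w" "L = span2 u w" using L(1) unfolding is_line_def by blast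
  obtain u' w' where L'_eq: "lin_indep2 u' w'" "L' = span2 u' w'"
    using L'(1) unfolding surface_line_def is_line_def by blast
  have "cubic_dir C Q u = 0" "cubic_dir C Q w = 0"
    using L(2) span2_left span2_right unfolding L_eq(2) by blast+
  moreover have "cubic_dir C Q u' = 0" "cubic_dir C Q w' = 0"
    using surface_line_coeffs[OF L'] L'(2) span2_left span2_right unfolding L'_eq(2) by blast+
  ultimately show ?thesis using coplanar_lines_not_skew[of "\<lambda>i. form_deriv 3 C i Q" k u w u' w'] sing L_eq L'_eq
    unfolding cubic_dir_lin_eval by simp
qed

subsection \<open>The Eckardt configuration\<close>

lemma split_cubic_expansion:
  fixes C q :: "(4 \<Rightarrow> nat) \<Rightarrow> 'a::alg_closed_field"
  assumes split: "\<And>x. lin_eval d x = 0 \<Longrightarrow> form_eval 3 C x = lin_eval a x * form_eval 2 q x"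
    and QH: "lin_eval d Q = 0" and qQ: "form_eval 2 q Q = 0" and xH: "lin_eval d x = 0"
  shows "cubic_dir C Q x = lin_eval a Q * quad_polar q Q x"
    and "cubic_mixed C Q x = lin_eval a Q * form_eval 2 q x + lin_eval a x * quad_polar q Q x"
proof -
  have "s^3 * form_eval 3 C Q + s^2*t * cubic_dir C Q x + s*t^2 * cubic_mixed C Q x + t^3 * form_eval 3 C x
      = s^3 * (lin_eval a Q * form_eval 2 q Q)
        + s^2*t * (lin_eval a Q * quad_polar q Q x + lin_eval a x * form_eval 2 q Q)
        + s*t^2 * (lin_eval a Q * form_eval 2 q x + lin_eval a x * quad_polar q Q x)
        + t^3 * (lin_eval a x * form_eval 2 q x)" for s t
  proof -
    have "lin_eval d (lincomb s Q t x) = 0" using QH xH by (simp add: lin_eval_lincomb)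
    hence "form_eval 3 C (lincomb s Q t x) = lin_eval a (lincomb s Q t x) * form_eval 2 q (lincomb s Q t x)"
      by (rule split)
    also have "\<dots> = (s * lin_eval a Q + t * lin_eval a x) *
        (s^2 * form_eval 2 q Q + s*t * quad_polar q Q x + t^2 * form_eval 2 q x)"
      by (simp add: lin_eval_lincomb quad_expand)
    also have "\<dots> = s^3 * (lin_eval a Q * form_eval 2 q Q)
        + s^2*t * (lin_eval a Q * quad_polar q Q x + lin_eval a x * form_eval 2 q Q)
        + s*t^2 * (lin_eval a Q * form_eval 2 q x + lin_eval a x * quad_polar q Q x)
        + t^3 * (lin_eval a x * form_eval 2 q x)"
      by (simp add: algebra_simps power2_eq_square power3_eq_cube)
    finally show ?thesis unfolding cubic_expand .
  qed
  from binary_cubic_coeffs_eq[OF this] qQ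
  show "cubic_dir C Q x = lin_eval a Q * quad_polar q Q x"
    and "cubic_mixed C Q x = lin_eval a Q * form_eval 2 q x + lin_eval a x * quad_polar q Q x"
    by simp_all
qed

lemma three_lines_in_plane:
  fixes d Q y1 y2 y3 :: "4 \<Rightarrow> 'a::field"
  assumes dk: "d k \<noteq> 0"
    and H: "lin_eval d Q = 0" "lin_eval d y1 = 0" "lin_eval d y2 = 0" "lin_eval d y3 = 0"
    and i: "lin_indep2 Q y1" "lin_indep2 Q y2" "lin_indep2 Q y3"
    and ne: "span2 Q y1 \<noteq> span2 Q y2" "span2 Q y1 \<noteq> span2 Q y3" "span2 Q y2 \<noteq> span2 Q y3"
  obtains \<alpha> \<beta> \<gamma> where "y3 = lincomb \<alpha> Q 1 (lincomb \<beta> y1 \<gamma> y2)" "\<beta> \<noteq> 0" "\<gamma> \<noteq> 0"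
    and "\<And>a b g. \<forall>i. a * Q i + b * y1 i + g * y2 i = 0 \<Longrightarrow> a = 0 \<and> b = 0 \<and> g = 0"
proof -
  have indep3: "a = 0 \<and> b = 0 \<and> g = 0" if "\<forall>i. a * Q i + b * y1 i + g * y2 i = 0" for a b g
    using span2_eq_if_dependent[OF i(1,2) that] ne(1) by blast
  obtain a0 a1 a2 a3 where nz: "a0 \<noteq> 0 \<or> a1 \<noteq> 0 \<or> a2 \<noteq> 0 \<or> a3 \<noteq> 0"
    and dep: "\<forall>i. a0 * Q i + a1 * y1 i + a2 * y2 i + a3 * y3 i = 0"
    using hyperplane_four_dependent[OF dk H] by blast
  have a3: "a3 \<noteq> 0"
  proof
    assume "a3 = 0"
    hence "\<forall>i. a0 * Q i + a1 * y1 i + a2 * y2 i = 0" using dep by simp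
    thus False using indep3 nz \<open>a3 = 0\<close> by blast
  qed
  define \<alpha> \<beta> \<gamma> where "\<alpha> = -a0/a3" and "\<beta> = -a1/a3" and "\<gamma> = -a2/a3"
  have y3: "y3 = lincomb \<alpha> Q 1 (lincomb \<beta> y1 \<gamma> y2)" unfolding lincomb_def
  proof
    fix i
    have "(a0 * Q i + a1 * y1 i + a2 * y2 i) + a3 * y3 i = 0" using dep by blast
    hence e: "a3 * y3 i = - (a0 * Q i + a1 * y1 i + a2 * y2 i)" by (simp only: add_eq_0_iff)
    have "y3 i = (a3 * y3 i) / a3" using a3 by simp
    also have "\<dots> = \<alpha> * Q i + 1 * (\<beta> * y1 i + \<gamma> * y2 i)"
      unfolding e \<alpha>_def \<beta>_def \<gamma>_def by (simp add: divide_simps)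
    finally show "y3 i = \<alpha> * Q i + 1 * (\<beta> * y1 i + \<gamma> * y2 i)" .
  qed
  have \<gamma>: "\<gamma> \<noteq> 0"
  proof
    assume "\<gamma> = 0"
    hence "\<forall>i. \<alpha> * Q i + \<beta> * y1 i + (-1) * y3 i = 0" using y3 by (simp add: lincomb_def)
    hence "span2 Q y1 = span2 Q y3" by (rule span2_eq_if_dependent[OF i(1,3)]) simp
    thus False using ne(2) by simp
  qed
  have \<beta>: "\<beta> \<noteq> 0"
  proof
    assume "\<beta> = 0"
    hence "\<forall>i. \<alpha> * Q i + \<gamma> * y2 i + (-1) * y3 i = 0" using y3 by (simp add: lincomb_def)
    hence "span2 Q y2 = span2 Q y3" by (rule span2_eq_if_dependent[OF i(2,3)]) simp
    thus False using ne(3) by simp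
  qed
  show thesis by (rule that[OF y3 \<beta> \<gamma> indep3])
qed

lemma eckardt_point_mixed_term:
  fixes C :: "(4 \<Rightarrow> nat) \<Rightarrow> 'a::alg_closed_field"
  assumes nzQ: "nonzero_vec Q" and sing: "form_deriv 3 C k Q \<noteq> 0"
    and lines: "surface_line C L1" "surface_line C L2" "surface_line C L3"
    and dist: "L1 \<noteq> L2" "L1 \<noteq> L3" "L2 \<noteq> L3" and through: "Q \<in> L1" "Q \<in> L2" "Q \<in> L3"
  obtains y1 y2 where "\<And>a b g. \<forall>i. a * Q i + b * y1 i + g * y2 i = 0 \<Longrightarrow> a = 0 \<and> b = 0 \<and> g = 0"
    and "cubic_dir C Q y1 = 0" "cubic_dir C Q y2 = 0"
    and "\<And>b g. cubic_mixed C Q (lincomb b y1 g y2) = 0"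
proof -
  have line_data: "\<exists>y. lin_indep2 Q y \<and> L = span2 Q y \<and> cubic_dir C Q y = 0 \<and> cubic_mixed C Q y = 0"
    if L: "surface_line C L" "Q \<in> L" for L
  proof -
    have "is_line L" using L(1) unfolding surface_line_def by blast
    then obtain y where y: "lin_indep2 Q y" "L = span2 Q y" by (rule line_through_point[OF _ L(2) nzQ])
    hence "y \<in> L" using span2_right by blast
    thus ?thesis using y surface_line_coeffs[OF L] by blast
  qed
  obtain y1 where y1: "lin_indep2 Q y1" "L1 = span2 Q y1" "cubic_dir C Q y1 = 0" "cubic_mixed C Q y1 = 0"
    using line_data[OF lines(1) through(1)] by blast
  obtain y2 where y2: "lin_indep2 Q y2" "L2 = span2 Q y2" "cubic_dir C Q y2 = 0" "cubic_mixed C Q y2 = 0"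
    using line_data[OF lines(2) through(2)] by blast
  obtain y3 where y3: "lin_indep2 Q y3" "L3 = span2 Q y3" "cubic_dir C Q y3 = 0" "cubic_mixed C Q y3 = 0"
    using line_data[OF lines(3) through(3)] by blast
  have FQ: "form_eval 3 C Q = 0" and dirQ: "cubic_dir C Q Q = 0"
    using surface_line_coeffs[OF lines(1) through(1) through(1)] by blast+
  define dQ where "dQ = (\<lambda>i. form_deriv 3 C i Q)"
  have "dQ k \<noteq> 0" using sing unfolding dQ_def .
  moreover have "lin_eval dQ Q = 0" "lin_eval dQ y1 = 0" "lin_eval dQ y2 = 0" "lin_eval dQ y3 = 0"
    using dirQ y1(3) y2(3) y3(3) unfolding dQ_def cubic_dir_lin_eval by blast+
  moreover note y1(1) y2(1) y3(1)
  moreover have "span2 Q y1 \<noteq> span2 Q y2" "span2 Q y1 \<noteq> span2 Q y3" "span2 Q y2 \<noteq> span2 Q y3"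
    using dist unfolding y1(2) y2(2) y3(2) .
  ultimately obtain \<alpha> \<beta> \<gamma> where y3_eq: "y3 = lincomb \<alpha> Q 1 (lincomb \<beta> y1 \<gamma> y2)"
    and \<beta>: "\<beta> \<noteq> 0" and \<gamma>: "\<gamma> \<noteq> 0"
    and indep3: "\<And>a b g. \<forall>i. a * Q i + b * y1 i + g * y2 i = 0 \<Longrightarrow> a = 0 \<and> b = 0 \<and> g = 0"
    by (rule three_lines_in_plane) blast
  text \<open>The mixed term is a quadratic form vanishing in three distinct directions of the
    pencil spanned by y1 and y2, so its cross term vanishes too.\<close>
  have "cubic_mixed C Q y3 = cubic_mixed C Q (lincomb \<beta> y1 \<gamma> y2)"
    unfolding y3_eq cubic_mixed_self using FQ y1(3) y2(3) by (simp add: cubic_dir_linear)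
  also have "\<dots> = \<beta> * \<gamma> * (cubic_mixed C Q (lincomb 1 y1 1 y2) - cubic_mixed C Q y1 - cubic_mixed C Q y2)"
    by (subst cubic_mixed_quadratic) (simp add: y1(4) y2(4))
  finally have "cubic_mixed C Q (lincomb 1 y1 1 y2) - cubic_mixed C Q y1 - cubic_mixed C Q y2 = 0"
    using y3(4) \<beta> \<gamma> by simp
  hence cross: "cubic_mixed C Q (lincomb 1 y1 1 y2) = 0" using y1(4) y2(4) by simp
  have "cubic_mixed C Q (lincomb b y1 g y2) = 0" for b g
    by (subst cubic_mixed_quadratic) (simp add: cross y1(4) y2(4))
  thus thesis using that indep3 y1(3) y2(3) by blast
qed

definition quad_contains_line :: "((4 \<Rightarrow> nat) \<Rightarrow> 'a::field) \<Rightarrow> (4 \<Rightarrow> 'a) \<Rightarrow> (4 \<Rightarrow> 'a) \<Rightarrow> bool" where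
  "quad_contains_line q x y \<longleftrightarrow> form_eval 2 q x = 0 \<and> form_eval 2 q y = 0 \<and> quad_polar q x y = 0"

lemma quad_contains_line_vanishes: "quad_contains_line q x y \<Longrightarrow> form_eval 2 q (lincomb s x t y) = 0"
  unfolding quad_contains_line_def by (simp add: quad_expand)

lemma eckardt_point_conic_contains_line:
  fixes C q :: "(4 \<Rightarrow> nat) \<Rightarrow> 'a::alg_closed_field"
  assumes split: "\<And>x. lin_eval d x = 0 \<Longrightarrow> form_eval 3 C x = lin_eval a x * form_eval 2 q x"
    and QH: "lin_eval d Q = 0" and aQ: "lin_eval a Q \<noteq> 0"
    and nzQ: "nonzero_vec Q" and sing: "form_deriv 3 C k Q \<noteq> 0"
    and lines: "surface_line C L1" "surface_line C L2" "surface_line C L3"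
    and dist: "L1 \<noteq> L2" "L1 \<noteq> L3" "L2 \<noteq> L3" and through: "Q \<in> L1" "Q \<in> L2" "Q \<in> L3"
  obtains w where "lin_eval d w = 0" "lin_indep2 Q w" "quad_contains_line q Q w"
proof -
  have "form_eval 3 C Q = 0" using surface_line_coeffs[OF lines(1) through(1) through(1)] by blast
  hence qQ: "form_eval 2 q Q = 0" using split[OF QH] aQ by simp
  obtain y1 y2 where indep3: "\<And>a b g. \<forall>i. a * Q i + b * y1 i + g * y2 i = 0 \<Longrightarrow> a = 0 \<and> b = 0 \<and> g = 0"
    and dir: "cubic_dir C Q y1 = 0" "cubic_dir C Q y2 = 0"
    and mixed: "\<And>b g. cubic_mixed C Q (lincomb b y1 g y2) = 0"
    using eckardt_point_mixed_term[OF nzQ sing lines dist through] by blast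
  text \<open>The plane spanned by Q, y1, y2 meets H in a line through Q.\<close>
  obtain b g where bg: "b \<noteq> 0 \<or> g \<noteq> 0" "lin_eval d (lincomb b y1 g y2) = 0"
  proof (cases "lin_eval d y1 = 0")
    case True thus thesis using that[of 1 0] by (simp add: lin_eval_lincomb)
  next
    case False thus thesis using that[of "lin_eval d y2" "- lin_eval d y1"] by (simp add: lin_eval_lincomb)
  qed
  define w where "w = lincomb b y1 g y2"
  have wH: "lin_eval d w = 0" unfolding w_def by (rule bg(2))
  have "lin_indep2 Q w" unfolding lin_indep2_def
  proof (intro allI impI)
    fix x y assume "\<forall>i. x * Q i + y * w i = 0"
    hence "\<forall>i. x * Q i + (y*b) * y1 i + (y*g) * y2 i = 0" unfolding w_def lincomb_def by (simp add: algebra_simps)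
    hence "x = 0 \<and> y*b = 0 \<and> y*g = 0" by (rule indep3)
    thus "x = 0 \<and> y = 0" using bg(1) by auto
  qed
  moreover have "cubic_dir C Q w = 0" unfolding w_def cubic_dir_linear using dir by simp
  hence polar_w: "quad_polar q Q w = 0" using split_cubic_expansion(1)[OF split QH qQ wH] aQ by simp
  moreover have "cubic_mixed C Q w = 0" unfolding w_def by (rule mixed)
  hence "form_eval 2 q w = 0" using split_cubic_expansion(2)[OF split QH qQ wH] aQ polar_w by simp
  ultimately show thesis using that wH qQ unfolding quad_contains_line_def by blast
qed

subsection \<open>Rationality over K\<close>

lemma K_line_meets_K_plane_in_K_point:
  fixes U W dK :: "4 \<Rightarrow> 'k::field" and Q :: "4 \<Rightarrow> 'k alg_closure"
  assumes Q: "Q \<in> span2 (lift_vec U) (lift_vec W)" and QH: "lin_eval (lift_vec dK) Q = 0"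
    and nzQ: "nonzero_vec Q" and not_in: "lin_eval dK U \<noteq> 0 \<or> lin_eval dK W \<noteq> 0"
  obtains \<kappa> Q0 where "\<kappa> \<noteq> 0" "Q = (\<lambda>i. \<kappa> * to_ac (Q0 i))"
proof -
  obtain \<alpha> \<beta> where Q_eq: "Q = lincomb \<alpha> (lift_vec U) \<beta> (lift_vec W)"
    using Q unfolding span2_def lincomb_def by blast
  define eU eW where "eU = lin_eval dK U" and "eW = lin_eval dK W"
  have rel: "\<alpha> * to_ac eU + \<beta> * to_ac eW = 0"
    using QH unfolding Q_eq lin_eval_lincomb eU_def eW_def lin_eval_lift .
  define Q0 where "Q0 = (\<lambda>i. eW * U i - eU * W i)"
  define \<kappa> where "\<kappa> = (if eW \<noteq> 0 then \<alpha> / to_ac eW else - \<beta> / to_ac eU)"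
  have Q_multiple: "Q = (\<lambda>i. \<kappa> * to_ac (Q0 i))"
  proof (cases "eW \<noteq> 0")
    case True
    have "\<beta> * to_ac eW = - (\<alpha> * to_ac eU)" using rel by (simp only: add_eq_0_iff)
    hence \<beta>: "\<beta> = - \<alpha> * to_ac eU / to_ac eW" using True by (simp add: field_simps)
    show ?thesis using True unfolding Q_eq lincomb_def \<kappa>_def Q0_def \<beta> by (simp add: fun_eq_iff field_simps)
  next
    case False
    hence "eU \<noteq> 0" using not_in unfolding eU_def eW_def by blast
    moreover have "\<alpha> = 0" using rel False \<open>eU \<noteq> 0\<close> by simp
    ultimately show ?thesis using False unfolding Q_eq lincomb_def \<kappa>_def Q0_def by (simp add: fun_eq_iff field_simps)
  qed
  have "\<kappa> \<noteq> 0"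
  proof
    assume "\<kappa> = 0"
    hence "\<not> nonzero_vec Q" unfolding Q_multiple nonzero_vec_def by simp
    thus False using nzQ by simp
  qed
  thus thesis using that Q_multiple by blast
qed

lemma skew_K_line_meets_K_plane_in_K_point:
  fixes dK :: "4 \<Rightarrow> 'k::field" and Q :: "4 \<Rightarrow> 'k alg_closure"
  assumes dk: "dK k \<noteq> 0" and l: "K_line l" and l': "K_line l'" and skew: "skew l l'"
    and lH: "\<forall>x\<in>l. lin_eval (lift_vec dK) x = 0"
    and Q: "Q \<in> l'" "lin_eval (lift_vec dK) Q = 0" "nonzero_vec Q"
  obtains \<kappa> Q0 where "\<kappa> \<noteq> 0" "Q = (\<lambda>i. \<kappa> * to_ac (Q0 i))"
proof -
  obtain U W where UW: "lin_indep2 (lift_vec U) (lift_vec W)" "l = span2 (lift_vec U) (lift_vec W)"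
    using l unfolding K_line_def by blast
  obtain U' W' where UW': "lin_indep2 (lift_vec U') (lift_vec W')" "l' = span2 (lift_vec U') (lift_vec W')"
    using l' unfolding K_line_def by blast
  have "lin_eval dK U' \<noteq> 0 \<or> lin_eval dK W' \<noteq> 0"
  proof (rule ccontr)
    assume "\<not> (lin_eval dK U' \<noteq> 0 \<or> lin_eval dK W' \<noteq> 0)"
    hence "lin_eval (lift_vec dK) (lift_vec U') = 0" "lin_eval (lift_vec dK) (lift_vec W') = 0"
      by (simp_all add: lin_eval_lift)
    moreover have "lin_eval (lift_vec dK) (lift_vec U) = 0" "lin_eval (lift_vec dK) (lift_vec W) = 0"
      using lH span2_left span2_right unfolding UW(2) by blast+
    ultimately have "\<not> skew l l'"
      using coplanar_lines_not_skew[where d = "lift_vec dK" and k = k, OF _ UW(1) UW'(1)] dk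
      unfolding UW(2) UW'(2) by simp
    thus False using skew by contradiction
  qed
  thus thesis using K_line_meets_K_plane_in_K_point[OF _ Q(2,3)] Q(1) UW'(2) that by blast
qed

lemma lin_indep2_scale:
  fixes x y :: "4 \<Rightarrow> 'a::field"
  assumes "\<kappa> \<noteq> 0"
  shows "lin_indep2 (\<lambda>i. \<kappa> * x i) y \<longleftrightarrow> lin_indep2 x y"
proof
  assume h: "lin_indep2 (\<lambda>i. \<kappa> * x i) y"
  show "lin_indep2 x y" unfolding lin_indep2_def
  proof (intro allI impI)
    fix a b assume "\<forall>i. a * x i + b * y i = 0"
    hence "\<forall>i. (a/\<kappa>) * (\<kappa> * x i) + b * y i = 0" using assms by simp
    hence "a/\<kappa> = 0 \<and> b = 0" using h unfolding lin_indep2_def by blast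
    thus "a = 0 \<and> b = 0" using assms by simp
  qed
next
  assume h: "lin_indep2 x y"
  show "lin_indep2 (\<lambda>i. \<kappa> * x i) y" unfolding lin_indep2_def
  proof (intro allI impI)
    fix a b assume "\<forall>i. a * (\<kappa> * x i) + b * y i = 0"
    hence "\<forall>i. (a*\<kappa>) * x i + b * y i = 0" by (simp add: mult.assoc)
    hence "a*\<kappa> = 0 \<and> b = 0" using h unfolding lin_indep2_def by blast
    thus "a = 0 \<and> b = 0" using assms by simp
  qed
qed

lemma quad_contains_line_scale:
  fixes q :: "(4 \<Rightarrow> nat) \<Rightarrow> 'a::field"
  assumes "\<kappa> \<noteq> 0"
  shows "quad_contains_line q (\<lambda>i. \<kappa> * x i) y \<longleftrightarrow> quad_contains_line q x y"
  unfolding quad_contains_line_def using assms by (simp add: quad_scale quad_polar_scale)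

text \<open>A K-plane H contains K-points outside the zero set of any K-linear form that does
  not vanish on H.  The vectors d_k e_j - d_j e_k (with d_k \<noteq> 0) span H.\<close>

lemma lin_eval_pivot: "lin_eval l (\<lambda>m. a * unitv j m - b * unitv k m) = a * l j - b * l k"
proof -
  have "(\<lambda>m. a * unitv j m - b * unitv k m) = lincomb a (unitv j) (-b) (unitv k)"
    unfolding lincomb_def by simp
  thus ?thesis by (simp add: lin_eval_lincomb lin_eval_unitv)
qed

lemma pivot_sum:
  fixes d l x :: "4 \<Rightarrow> 'a::field"
  assumes "lin_eval d x = 0"
  shows "(\<Sum>j\<in>UNIV. x j * lin_eval l (\<lambda>m. d k * unitv j m - d j * unitv k m)) = d k * lin_eval l x"
proof -
  have "(\<Sum>j\<in>UNIV. x j * lin_eval l (\<lambda>m. d k * unitv j m - d j * unitv k m))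
     = (\<Sum>j\<in>UNIV. d k * (l j * x j) - l k * (d j * x j))"
    unfolding lin_eval_pivot by (rule sum.cong) (simp_all add: algebra_simps)
  also have "\<dots> = d k * lin_eval l x - l k * lin_eval d x"
    unfolding lin_eval_def by (simp add: sum_subtractf sum_distrib_left)
  finally show ?thesis using assms by simp
qed

lemma K_point_off_form:
  fixes dK lK :: "4 \<Rightarrow> 'k::field" and x0 :: "4 \<Rightarrow> 'k alg_closure"
  assumes dk: "dK k \<noteq> 0" and x0H: "lin_eval (lift_vec dK) x0 = 0"
    and lx0: "lin_eval (lift_vec lK) x0 \<noteq> 0"
  obtains z where "lin_eval dK z = 0" "lin_eval lK z \<noteq> 0"
proof -
  define f where "f = (\<lambda>j m. dK k * unitv j m - dK j * unitv k m)"
  have f_lift: "lift_vec (f j) = (\<lambda>m. to_ac (dK k) * unitv j m - to_ac (dK j) * unitv k m)" for j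
    unfolding f_def by (simp add: fun_eq_iff unitv_def)
  have "(\<Sum>j\<in>UNIV. x0 j * to_ac (lin_eval lK (f j))) = to_ac (dK k) * lin_eval (lift_vec lK) x0"
    using pivot_sum[OF x0H, of "lift_vec lK" k] unfolding lin_eval_lift[symmetric] f_lift .
  also have "\<dots> \<noteq> 0" using dk lx0 by simp
  finally have "\<exists>j. lin_eval lK (f j) \<noteq> 0"
  proof (rule contrapos_np)
    assume "\<not> (\<exists>j. lin_eval lK (f j) \<noteq> 0)"
    thus "(\<Sum>j\<in>UNIV. x0 j * to_ac (lin_eval lK (f j))) = 0" by simp
  qed
  then obtain j where "lin_eval lK (f j) \<noteq> 0" by blast
  moreover have "lin_eval dK (f j) = 0" unfolding f_def lin_eval_pivot by simp
  ultimately show thesis using that by blast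
qed

lemma quad_factors_through_form:
  fixes q :: "(4 \<Rightarrow> nat) \<Rightarrow> 'a::field" and d l Q w Z x :: "4 \<Rightarrow> 'a"
  assumes dk: "d k \<noteq> 0"
    and H: "lin_eval d Q = 0" "lin_eval d w = 0" "lin_eval d Z = 0" "lin_eval d x = 0"
    and indep: "lin_indep2 Q w" and on_line: "quad_contains_line q Q w"
    and lQ: "lin_eval l Q = 0" and lw: "lin_eval l w = 0" and lZ: "lin_eval l Z \<noteq> 0"
  shows "form_eval 2 q x = lin_eval l x *
    ((quad_polar q Z x - lin_eval l x * form_eval 2 q Z / lin_eval l Z) / lin_eval l Z)"
proof -
  define lam where "lam = lin_eval l x / lin_eval l Z"
  define m where "m = lincomb 1 x (-lam) Z"
  have mH: "lin_eval d m = 0" using H unfolding m_def lin_eval_lincomb by simp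
  have lm: "lin_eval l m = 0" using lZ unfolding m_def lin_eval_lincomb lam_def by simp
  text \<open>m lies on the line through Q and w, where q vanishes.\<close>
  obtain b0 b1 b2 b3 where nzb: "b0 \<noteq> 0 \<or> b1 \<noteq> 0 \<or> b2 \<noteq> 0 \<or> b3 \<noteq> 0"
    and dep: "\<forall>i. b0 * Q i + b1 * w i + b2 * m i + b3 * Z i = 0"
    using hyperplane_four_dependent[OF dk H(1,2) mH H(3)] by blast
  have "lin_eval l (\<lambda>i. b0 * Q i + b1 * w i + b2 * m i + b3 * Z i) = 0"
    using dep by (simp add: lin_eval_def)
  hence "b3 = 0" unfolding lin_eval_comb4 using lQ lw lm lZ by simp
  hence dep3: "\<forall>i. b0 * Q i + b1 * w i + b2 * m i = 0" using dep by simp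
  have "b2 \<noteq> 0"
  proof
    assume "b2 = 0"
    hence "\<forall>i. b0 * Q i + b1 * w i = 0" using dep3 by simp
    hence "b0 = 0 \<and> b1 = 0" using indep unfolding lin_indep2_def by blast
    thus False using nzb \<open>b3 = 0\<close> \<open>b2 = 0\<close> by simp
  qed
  with dep3 have "m = lincomb (-b0/b2) Q (-b1/b2) w" by (rule lincomb_solve)
  hence qm: "form_eval 2 q m = 0" using quad_contains_line_vanishes[OF on_line] by simp
  have "x = lincomb lam Z 1 m" unfolding m_def lincomb_def by (simp add: fun_eq_iff)
  hence "form_eval 2 q x = lam^2 * form_eval 2 q Z + lam * quad_polar q Z m + form_eval 2 q m"
    by (simp add: quad_expand)
  also have "quad_polar q Z m = quad_polar q Z x - lam * (2 * form_eval 2 q Z)"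
    unfolding m_def by (simp add: quad_polar_linear quad_polar_self)
  finally have "form_eval 2 q x = lam * quad_polar q Z x - lam^2 * form_eval 2 q Z"
    using qm by (simp add: algebra_simps power2_eq_square)
  thus ?thesis using lZ unfolding lam_def by (simp add: field_simps power2_eq_square)
qed

lemma conic_with_line_through_K_point_factors:
  fixes q :: "(4 \<Rightarrow> nat) \<Rightarrow> 'k::field" and dK Q0 :: "4 \<Rightarrow> 'k" and w x0 :: "4 \<Rightarrow> 'k alg_closure"
  assumes dk: "dK k \<noteq> 0"
    and Q0H: "lin_eval (lift_vec dK) (lift_vec Q0) = 0" and wH: "lin_eval (lift_vec dK) w = 0"
    and indep: "lin_indep2 (lift_vec Q0) w" and on_line: "quad_contains_line (lift_coeffs q) (lift_vec Q0) w"
    and x0H: "lin_eval (lift_vec dK) x0 = 0" and x0: "quad_polar (lift_coeffs q) (lift_vec Q0) x0 \<noteq> 0"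
  shows "\<exists>b b' :: 4 \<Rightarrow> 'k. \<forall>x. lin_eval (lift_vec dK) x = 0 \<longrightarrow>
           form_eval 2 (lift_coeffs q) x = lin_eval (lift_vec b) x * lin_eval (lift_vec b') x"
proof -
  define lK where "lK = (\<lambda>i. quad_polar q Q0 (unitv i))"
  have ell: "quad_polar (lift_coeffs q) (lift_vec Q0) x = lin_eval (lift_vec lK) x" for x
    unfolding lK_def by (rule quad_polar_rational)
  have lQ0: "lin_eval (lift_vec lK) (lift_vec Q0) = 0" and lw: "lin_eval (lift_vec lK) w = 0"
    using on_line unfolding ell[symmetric] quad_contains_line_def by (simp_all add: quad_polar_self)
  obtain z where zH: "lin_eval dK z = 0" and lz: "lin_eval lK z \<noteq> 0"
    using K_point_off_form[OF dk x0H] x0 unfolding ell by blast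
  have zH': "lin_eval (lift_vec dK) (lift_vec z) = 0" and lz': "lin_eval (lift_vec lK) (lift_vec z) \<noteq> 0"
    unfolding lin_eval_lift using zH lz by simp_all
  define rK where
    "rK = (\<lambda>i. (quad_polar q z (unitv i) - lK i * form_eval 2 q z / lin_eval lK z) / lin_eval lK z)"
  have r_eval: "lin_eval (lift_vec rK) x = (quad_polar (lift_coeffs q) (lift_vec z) x -
      lin_eval (lift_vec lK) x * form_eval 2 (lift_coeffs q) (lift_vec z) / lin_eval (lift_vec lK) (lift_vec z))
      / lin_eval (lift_vec lK) (lift_vec z)"
    for x
  proof -
    have "lin_eval (lift_vec rK) x = (\<Sum>i\<in>UNIV. x i * ((to_ac (quad_polar q z (unitv i))
        - to_ac (lK i) * to_ac (form_eval 2 q z) / to_ac (lin_eval lK z)) / to_ac (lin_eval lK z)))"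
      unfolding lin_eval_coord rK_def by simp
    also have "\<dots> = ((\<Sum>i\<in>UNIV. x i * to_ac (quad_polar q z (unitv i)))
        - (\<Sum>i\<in>UNIV. x i * to_ac (lK i)) * to_ac (form_eval 2 q z) / to_ac (lin_eval lK z)) / to_ac (lin_eval lK z)"
      unfolding sum_4 using lz by (simp add: field_simps)
    finally show ?thesis
      unfolding quad_polar_rational form_eval_lift lin_eval_lift
        lin_eval_coord[of "lift_vec lK" x] lin_eval_coord[of "lift_vec (\<lambda>i. quad_polar q z (unitv i))" x] .
  qed
  have "form_eval 2 (lift_coeffs q) x = lin_eval (lift_vec lK) x * lin_eval (lift_vec rK) x"
    if "lin_eval (lift_vec dK) x = 0" for x
    unfolding r_eval
    by (rule quad_factors_through_form[where d = "lift_vec dK" and k = k and Q = "lift_vec Q0" and w = w])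
      (use dk Q0H wH zH' that indep on_line lQ0 lw lz' in simp_all)
  thus ?thesis by blast
qed

theorem mainTheorem7:
  fixes c :: "(4 \<Rightarrow> nat) \<Rightarrow> 'k::field"
    and l l' :: "(4 \<Rightarrow> 'k alg_closure) set"
    and P :: "4 \<Rightarrow> 'k"
  assumes "smooth_cubic c"
    and "K_line l" and "line_on c l"
    and "K_line l'" and "line_on c l'"
    and "skew l l'"
    and "nonzero_vec P" and "lift_vec P \<in> l"
    and "gamma_line_plus_irred_conic c l P"
  shows "\<forall>Q. Q \<in> l' \<and> Q \<in> tangent_plane c (lift_vec P) \<and> nonzero_vec Q \<longrightarrow> \<not> eckardt c Q"
proof (intro allI impI notI)
  fix Q :: "4 \<Rightarrow> 'k alg_closure"
  assume "Q \<in> l' \<and> Q \<in> tangent_plane c (lift_vec P) \<and> nonzero_vec Q" and eck: "eckardt c Q"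
  hence Ql': "Q \<in> l'" and QPi: "Q \<in> tangent_plane c (lift_vec P)" and nzQ: "nonzero_vec Q" by auto
  obtain dK :: "4 \<Rightarrow> 'k" and k a q where dk: "dK k \<noteq> 0"
    and Pi: "tangent_plane c (lift_vec P) = {x. lin_eval (lift_vec dK) x = 0}"
    and split: "\<And>x. lin_eval (lift_vec dK) x = 0 \<Longrightarrow>
           form_eval 3 (lift_coeffs c) x = lin_eval (lift_vec a) x * form_eval 2 (lift_coeffs q) x"
    and l_eq: "l = {x. lin_eval (lift_vec dK) x = 0 \<and> lin_eval (lift_vec a) x = 0}"
    and irred: "\<not> (\<exists>b b' :: 4 \<Rightarrow> 'k. \<forall>x. lin_eval (lift_vec dK) x = 0 \<longrightarrow>
           form_eval 2 (lift_coeffs q) x = lin_eval (lift_vec b) x * lin_eval (lift_vec b') x)"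
    by (rule tangent_section_data[OF assms(1,7,3,8,9)]) blast
  have QH: "lin_eval (lift_vec dK) Q = 0" using QPi unfolding Pi by blast
  have lH: "\<forall>x\<in>l. lin_eval (lift_vec dK) x = 0" using l_eq by blast
  text \<open>Q is not on l, since l and l' are skew.\<close>
  have aQ: "lin_eval (lift_vec a) Q \<noteq> 0" using l_eq QH Ql' nzQ assms(6) unfolding skew_def by blast
  have "cubicF c Q = 0" using assms(5) Ql' unfolding line_on_def by blast
  then obtain k' where sing: "form_deriv 3 (lift_coeffs c) k' Q \<noteq> 0"
    using smooth_cubic_nonsingular[OF assms(1) nzQ] by blast
  obtain L1 L2 L3 where lines: "surface_line (lift_coeffs c) L1" "surface_line (lift_coeffs c) L2"
      "surface_line (lift_coeffs c) L3" and dist: "L1 \<noteq> L2" "L1 \<noteq> L3" "L2 \<noteq> L3"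
    and through: "Q \<in> L1" "Q \<in> L2" "Q \<in> L3"
    using eck unfolding eckardt_def line_on_iff by blast
  obtain w where wH: "lin_eval (lift_vec dK) w = 0" and "lin_indep2 Q w"
    and conic: "quad_contains_line (lift_coeffs q) Q w"
    by (rule eckardt_point_conic_contains_line[OF split QH aQ nzQ sing lines dist through])
  obtain \<kappa> Q0 where \<kappa>: "\<kappa> \<noteq> 0" and Q_eq: "Q = (\<lambda>i. \<kappa> * to_ac (Q0 i))"
    by (rule skew_K_line_meets_K_plane_in_K_point[OF dk assms(2,4,6) lH Ql' QH nzQ])
  show False
  proof (cases "\<exists>x0. lin_eval (lift_vec dK) x0 = 0 \<and> quad_polar (lift_coeffs q) (lift_vec Q0) x0 \<noteq> 0")
    case True
    text \<open>The polar form of q at the K-point Q0 divides q on the plane.\<close>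
    have "lin_eval (lift_vec dK) (lift_vec Q0) = 0" using QH \<kappa> unfolding Q_eq lin_eval_scale by simp
    moreover have "lin_indep2 (lift_vec Q0) w" using \<open>lin_indep2 Q w\<close> unfolding Q_eq lin_indep2_scale[OF \<kappa>] .
    moreover have "quad_contains_line (lift_coeffs q) (lift_vec Q0) w"
      using conic unfolding Q_eq quad_contains_line_scale[OF \<kappa>] .
    ultimately show False using conic_with_line_through_K_point_factors[OF dk _ wH] True irred by blast
  next
    case False
    text \<open>Otherwise the tangent plane of S at Q contains the plane Pi_P, hence l, and meets l'.\<close>
    have "form_eval 2 (lift_coeffs q) Q = 0" using conic unfolding quad_contains_line_def by blast
    hence "cubic_dir (lift_coeffs c) Q x = 0" if "lin_eval (lift_vec dK) x = 0" for x
      using split_cubic_expansion(1)[OF split QH _ that] False that unfolding Q_eq quad_polar_scale by auto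
    hence "\<forall>x\<in>l. cubic_dir (lift_coeffs c) Q x = 0" using lH by blast
    moreover have "is_line l" using assms(3) unfolding line_on_def by blast
    ultimately show False using line_in_tangent_plane_meets[OF sing _ Ql'] assms(5,6)
      unfolding line_on_iff by blast
  qed
qed

end
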